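(* Let $A$ be a complex vector space of dimension $n\ge2$, let $h$ be a symmetric bilinear form on $A$, let $c\in A$ with $h(\cdot,c)\ne0$, and define $x*y=h(x,c)y+h(x,y)c$. If $h(c,c)\neq0$, then $(A,* )$ is isomorphic to $A^1_{(3)}$ or to $A^{(k),2}_{(3)}$ for some $k\in\{0,\dots,n-2\}$. If $h(c,c)=0$, then $(A,* )$ is isomorphic to $A^{(k),3}_{(3)}$ for some $k\in\{0,\dots,n-2\}$.
   Context: All algebras have basis $e_1,\dots,e_n$ and only the listed products of basis vectors are nonzero. $A^1_{(3)}$: $e_1e_1=2e_1$, $e_1e_j=e_j$, $e_je_j=e_1$ ($j=2,\dots,n$). $A^{(k),2}_{(3)}$ ($0\le k\le n-2$): $e_1e_1=2e_1$, $e_1e_j=e_j$ ($j=2,\dots,n$), $e_le_l=e_1$ ($l=3,\dots,k+2$). $A^{(k),3}_{(3)}$ ($0\le k\le n-2$): $e_1e_2=e_1$, $e_2e_1=2e_1$, $e_2e_2=e_2$, $e_2e_j=e_j$ ($j=3,\dots,n$), $e_le_l=e_1$ ($l=3,\dots,k+2$). *)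

theory Defs
  imports Main Complex_Main
begin

text \<open>Structure constants of the model algebras on basis e_1..e_n:
  e_i e_j = sum over k of T i j k e_k.\<close>

definition A1_const :: "nat \<Rightarrow> nat \<Rightarrow> nat \<Rightarrow> nat \<Rightarrow> complex" where
  "A1_const n i j k =
     (if i = 1 \<and> j = 1 then (if k = 1 then 2 else 0)
      else if i = 1 \<and> 2 \<le> j \<and> j \<le> n then (if k = j then 1 else 0)
      else if i = j \<and> 2 \<le> j \<and> j \<le> n then (if k = 1 then 1 else 0)
      else 0)"

definition A2_const :: "nat \<Rightarrow> nat \<Rightarrow> nat \<Rightarrow> nat \<Rightarrow> nat \<Rightarrow> complex" where
  "A2_const n m i j k =
     (if i = 1 \<and> j = 1 then (if k = 1 then 2 else 0)
      else if i = 1 \<and> 2 \<le> j \<and> j \<le> n then (if k = j then 1 else 0)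
      else if i = j \<and> 3 \<le> j \<and> j \<le> m + 2 then (if k = 1 then 1 else 0)
      else 0)"

definition A3_const :: "nat \<Rightarrow> nat \<Rightarrow> nat \<Rightarrow> nat \<Rightarrow> nat \<Rightarrow> complex" where
  "A3_const n m i j k =
     (if i = 1 \<and> j = 2 then (if k = 1 then 1 else 0)
      else if i = 2 \<and> j = 1 then (if k = 1 then 2 else 0)
      else if i = 2 \<and> j = 2 then (if k = 2 then 1 else 0)
      else if i = 2 \<and> 3 \<le> j \<and> j \<le> n then (if k = j then 1 else 0)
      else if i = j \<and> 3 \<le> j \<and> j \<le> m + 2 then (if k = 1 then 1 else 0)
      else 0)"

definition iso_to_model ::
  "(complex \<Rightarrow> 'a::ab_group_add \<Rightarrow> 'a) \<Rightarrow> ('a \<Rightarrow> 'a \<Rightarrow> 'a) \<Rightarrow> nat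
     \<Rightarrow> (nat \<Rightarrow> nat \<Rightarrow> nat \<Rightarrow> complex) \<Rightarrow> bool" where
  "iso_to_model scale mult n T \<longleftrightarrow>
     (\<exists>b :: nat \<Rightarrow> 'a.
        inj_on b {1..n} \<and>
        module.independent scale (b ` {1..n}) \<and>
        module.span scale (b ` {1..n}) = UNIV \<and>
        (\<forall>i\<in>{1..n}. \<forall>j\<in>{1..n}.
            mult (b i) (b j) = (\<Sum>k = 1..n. scale (T i j k) (b k))))"

definition sym_bilinear_form ::
  "(complex \<Rightarrow> 'a::ab_group_add \<Rightarrow> 'a) \<Rightarrow> ('a \<Rightarrow> 'a \<Rightarrow> complex) \<Rightarrow> bool" where
  "sym_bilinear_form scale h \<longleftrightarrow>
     (\<forall>x y. h x y = h y x) \<and>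
     (\<forall>x y z. h (x + y) z = h x z + h y z) \<and>
     (\<forall>a x z. h (scale a x) z = a * h x z)"

end

theory Submission
  imports Defs
begin

(* Since x * y = h(x,c) y + h(x,y) c, in a basis b_1, ..., b_n with c = gamma b_1 the product
   is b_i * b_j = h(b_i,c) b_j + gamma h(b_i,b_j) b_1, so it suffices to find a basis in which the values
   h(b_i,c) and the Gram matrix of h are those of a model. Over C a symmetric bilinear form is
   diagonal in a suitable basis, with every diagonal entry equal to 0 or to a prescribed alpha ~= 0.
   If h(c,c) ~= 0, take b_1 = c / h(c,c) and diagonalise h on the orthogonal complement of c with
   alpha = 1 / h(c,c): this gives A^1 if h is nondegenerate there and A^(k),2 otherwise. If h(c,c) = 0,
   choose f with h(f,c) = 1 and h(f,f) = 0, take b_1 = c, b_2 = f and diagonalise h on the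
   orthogonal complement of {c, f} with alpha = 1: this gives A^(k),3. *)

lemma bij_betw_preserving_subset:
  assumes "finite W" "W1 \<subseteq> W" "finite J" "I \<subseteq> J" "card I = card W1" "card J = card W"
  obtains g where "bij_betw g J W" "\<And>j. j \<in> J \<Longrightarrow> g j \<in> W1 \<longleftrightarrow> j \<in> I"
proof -
  have "finite I" "finite W1" using assms finite_subset by auto
  then obtain g1 where g1: "bij_betw g1 I W1" using assms(5) finite_same_card_bij by blast
  have "card (J - I) = card (W - W1)"
    using assms \<open>finite I\<close> \<open>finite W1\<close> by (simp add: card_Diff_subset)
  then obtain g0 where g0: "bij_betw g0 (J - I) (W - W1)"
    using assms finite_same_card_bij by (meson finite_Diff)
  define g where "g j = (if j \<in> I then g1 j else g0 j)" for j
  have on_I: "bij_betw g I W1"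
    using g1 by (rule bij_betw_cong[THEN iffD1, rotated]) (simp add: g_def)
  have off_I: "bij_betw g (J - I) (W - W1)"
    using g0 by (rule bij_betw_cong[THEN iffD1, rotated]) (simp add: g_def)
  have "bij_betw g (I \<union> (J - I)) (W1 \<union> (W - W1))"
    by (rule bij_betw_combine[OF on_I off_I]) blast
  moreover have "I \<union> (J - I) = J" "W1 \<union> (W - W1) = W" using assms by auto
  moreover have "g j \<in> W1 \<longleftrightarrow> j \<in> I" if "j \<in> J" for j
    using that on_I off_I by (auto simp: bij_betw_def)
  ultimately show thesis using that by simp
qed

(* [dim] is also 0 for infinite-dimensional spaces, hence the hypothesis [0 < n]. *)
lemma finite_dimensional_vector_space_of_dim:
  fixes scale :: "'f::field \<Rightarrow> 'a::ab_group_add \<Rightarrow> 'a"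
  assumes vs: "vector_space scale" and dim: "vector_space.dim scale (UNIV :: 'a set) = n"
    and "0 < n"
  obtains B where "finite_dimensional_vector_space scale B"
proof -
  interpret vector_space scale by (rule vs)
  have "\<exists>B. independent B \<and> span B = span UNIV"
    using dim \<open>0 < n\<close> unfolding dim_def by (metis less_irrefl)
  then obtain B where B: "independent B" "span B = UNIV" "card B = n"
    using dim_eq_card dim by auto
  then have "finite B" using \<open>0 < n\<close> card.infinite by force
  with B show thesis
    by (intro that finite_dimensional_vector_space.intro vs
        finite_dimensional_vector_space_axioms.intro)
qed

lemma iso_to_modelI:
  fixes scale :: "complex \<Rightarrow> 'a::ab_group_add \<Rightarrow> 'a" and b :: "nat \<Rightarrow> 'a"
  assumes fd: "finite_dimensional_vector_space scale B"
    and dim: "vector_space.dim scale (UNIV :: 'a set) = n"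
    and span: "module.span scale (b ` {1..n}) = UNIV"
    and table: "\<And>i j. i \<in> {1..n} \<Longrightarrow> j \<in> {1..n} \<Longrightarrow>
                  mult (b i) (b j) = (\<Sum>k = 1..n. scale (T i j k) (b k))"
  shows "iso_to_model scale mult n T"
proof -
  interpret finite_dimensional_vector_space scale B by (rule fd)
  have "n \<le> card (b ` {1..n})" using dim_le_card[of UNIV "b ` {1..n}"] span dim by simp
  then have card: "card (b ` {1..n}) = n" using card_image_le[of "{1..n}" b] by simp
  then have "inj_on b {1..n}" by (simp add: inj_on_iff_eq_card)
  moreover have "independent (b ` {1..n})"
    using card_le_dim_spanning[of "b ` {1..n}" UNIV] span dim card by simp
  ultimately show ?thesis unfolding iso_to_model_def using span table by blast
qed

locale symmetric_form_space = finite_dimensional_vector_space scale Basis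
  for scale :: "complex \<Rightarrow> 'a::ab_group_add \<Rightarrow> 'a" and Basis :: "'a set" +
  fixes h :: "'a \<Rightarrow> 'a \<Rightarrow> complex"
  assumes sym_bilinear: "sym_bilinear_form scale h"
begin

abbreviation form_mult :: "'a \<Rightarrow> 'a \<Rightarrow> 'a \<Rightarrow> 'a" where
  "form_mult c x y \<equiv> scale (h x c) y + scale (h x y) c"

lemma form_commute: "h x y = h y x"
  using sym_bilinear unfolding sym_bilinear_form_def by blast

lemma form_add_left [simp]: "h (x + y) z = h x z + h y z"
  using sym_bilinear unfolding sym_bilinear_form_def by blast

lemma form_scale_left [simp]: "h (scale a x) z = a * h x z"
  using sym_bilinear unfolding sym_bilinear_form_def by blast

lemma form_add_right [simp]: "h z (x + y) = h z x + h z y"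
  by (metis form_add_left form_commute)

lemma form_scale_right [simp]: "h z (scale a x) = a * h z x"
  by (metis form_scale_left form_commute)

lemma form_zero_left [simp]: "h 0 z = 0"
  using form_scale_left[of 0] by simp

lemma form_zero_right [simp]: "h z 0 = 0"
  by (metis form_zero_left form_commute)

lemma form_diff_left [simp]: "h (x - y) z = h x z - h y z"
proof -
  have "h (x - y) z = h (x + scale (-1) y) z" by simp
  also have "\<dots> = h x z - h y z" by (simp only: form_add_left form_scale_left) simp
  finally show ?thesis .
qed

lemma form_diff_right [simp]: "h z (x - y) = h z x - h z y"
  by (metis form_diff_left form_commute)

definition orthogonal_complement :: "'a set \<Rightarrow> 'a set" where
  "orthogonal_complement H = {x. \<forall>y\<in>H. h x y = 0}"

lemma subspace_orthogonal_complement: "subspace (orthogonal_complement H)"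
  by (simp add: subspace_def orthogonal_complement_def)

lemma span_orthogonal_complement [simp]: "span (orthogonal_complement H) = orthogonal_complement H"
  by (simp add: subspace_orthogonal_complement)

lemma span_insert_orthogonal_complement:
  assumes "v \<in> span S" "h v v \<noteq> 0"
  shows "span (insert v (span S \<inter> orthogonal_complement {v})) = span S"
proof -
  have "x \<in> span (insert v (span S \<inter> orthogonal_complement {v}))" if "x \<in> span S" for x
  proof -
    have "x - scale (h x v / h v v) v \<in> span S \<inter> orthogonal_complement {v}"
      using assms that by (simp add: orthogonal_complement_def span_diff span_scale)
    then show ?thesis by (metis span_base span_breakdown_eq)
  qed
  moreover have "insert v (span S \<inter> orthogonal_complement {v}) \<subseteq> span S"
    using assms(1) by blast
  ultimately show ?thesis by (metis span_eq span_span subsetI)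
qed

lemma orthogonal_basis_exists:
  "\<exists>W. independent W \<and> span W = span S \<and> pairwise (\<lambda>x y. h x y = 0) W"
proof (induction "dim S" arbitrary: S rule: less_induct)
  case less
  show ?case
  proof (cases "\<exists>v\<in>span S. h v v \<noteq> 0")
    case False
    have "h x y = 0" if "x \<in> span S" "y \<in> span S" for x y
    proof -
      have "h (x + y) (x + y) = 0" "h x x = 0" "h y y = 0"
        using False that span_add by blast+
      then have "2 * h x y = 0" by (simp add: form_commute[of y x] algebra_simps)
      then show ?thesis by simp
    qed
    moreover obtain W where "W \<subseteq> span S" "independent W" "span S \<subseteq> span W"
      by (rule basis_exists)
    moreover from this have "span W = span S"
      by (metis span_span span_mono subset_antisym)
    ultimately show ?thesis unfolding pairwise_def by blast
  next
    case True
    then obtain v where v: "v \<in> span S" "h v v \<noteq> 0" by blast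
    define T where "T = span S \<inter> orthogonal_complement {v}"
    have "subspace T"
      unfolding T_def by (intro subspace_inter subspace_span subspace_orthogonal_complement)
    then have span_T: "span T = T" by simp
    have "v \<notin> T" using v(2) by (simp add: T_def orthogonal_complement_def)
    then have v_notin: "v \<notin> span T" unfolding span_T .
    have span_insert: "span (insert v T) = span S"
      unfolding T_def using v by (rule span_insert_orthogonal_complement)
    then have "dim S = dim (insert v T)" by (rule span_eq_dim[symmetric])
    also have "\<dots> = dim T + 1" using v_notin by (simp add: dim_insert)
    finally obtain W where W: "independent W" "span W = span T" "pairwise (\<lambda>x y. h x y = 0) W"
      using less(1)[of T] by auto
    have "W \<subseteq> T" using W(2) span_superset[of W] span_T by blast
    then have "pairwise (\<lambda>x y. h x y = 0) (insert v W)"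
      using W(3) by (auto simp: pairwise_insert T_def orthogonal_complement_def form_commute)
    moreover have "independent (insert v W)"
      using W(1,2) v_notin by (simp add: independent_insertI)
    moreover have "span (insert v W) = span S"
      using span_insert W(2) by (simp add: set_eq_iff span_breakdown_eq)
    ultimately show ?thesis by blast
  qed
qed

(* The witness m is the rank of h on span S. *)
lemma diagonal_family_exists:
  assumes "\<alpha> \<noteq> 0"
  obtains m where "m \<le> dim S"
    "\<And>J I. finite J \<Longrightarrow> card J = dim S \<Longrightarrow> I \<subseteq> J \<Longrightarrow> card I = m \<Longrightarrow>
       \<exists>w. span (w ` J) = span S \<and>
           (\<forall>i\<in>J. \<forall>j\<in>J. h (w i) (w j) = (if i = j \<and> i \<in> I then \<alpha> else 0))"
proof -
  obtain W where W: "independent W" "span W = span S" "pairwise (\<lambda>x y. h x y = 0) W"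
    using orthogonal_basis_exists by blast
  have "finite W" using W(1) by (rule finiteI_independent)
  have card_W: "card W = dim S" using dim_eq_card[OF W(2) W(1)] by simp
  define W1 where "W1 = {w \<in> W. h w w \<noteq> 0}"
  have "W1 \<subseteq> W" by (auto simp: W1_def)
  define s where "s w = (if h w w = 0 then 1 else csqrt (\<alpha> / h w w))" for w
  have s_nonzero: "s w \<noteq> 0" for w using assms by (simp add: s_def)
  have s_normalizes: "s w * (s w * h w w) = (if h w w = 0 then 0 else \<alpha>)" for w
    using power2_csqrt[of "\<alpha> / h w w"]
    by (simp add: s_def power2_eq_square mult.assoc[symmetric])
  show thesis
  proof (rule that)
    show "card W1 \<le> dim S" using card_mono[OF \<open>finite W\<close> \<open>W1 \<subseteq> W\<close>] card_W by simp
    fix J I assume J: "finite J" "card J = dim S" "I \<subseteq> J" "card I = card W1"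
    obtain g where g: "bij_betw g J W" "\<And>j. j \<in> J \<Longrightarrow> g j \<in> W1 \<longleftrightarrow> j \<in> I"
      using bij_betw_preserving_subset[OF \<open>finite W\<close> \<open>W1 \<subseteq> W\<close> J(1,3,4)] J(2) card_W by metis
    define w where "w j = scale (s (g j)) (g j)" for j
    have "w ` J = (\<lambda>x. scale (s x) x) ` W"
      using bij_betw_imp_surj_on[OF g(1)] by (auto simp: w_def image_image[symmetric])
    then have "span (w ` J) = span S"
      using span_image_scale[OF \<open>finite W\<close>] s_nonzero W(2) by simp
    moreover have "h (w i) (w j) = (if i = j \<and> i \<in> I then \<alpha> else 0)" if "i \<in> J" "j \<in> J" for i j
    proof (cases "i = j")
      case True
      then show ?thesis
        using s_normalizes[of "g j"] g(2)[OF \<open>j \<in> J\<close>] bij_betw_apply[OF g(1) \<open>j \<in> J\<close>]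
        by (auto simp: w_def W1_def)
    next
      case False
      then have "g i \<noteq> g j" using g(1) that by (auto simp: bij_betw_def inj_on_def)
      then show ?thesis
        using False W(3) bij_betw_apply[OF g(1)] that by (simp add: w_def pairwise_def)
    qed
    ultimately show "\<exists>w. span (w ` J) = span S \<and>
        (\<forall>i\<in>J. \<forall>j\<in>J. h (w i) (w j) = (if i = j \<and> i \<in> I then \<alpha> else 0))"
      by blast
  qed
qed

lemma iso_to_model_form_mult:
  assumes dim: "dim UNIV = n" and span: "span (b ` {1..n}) = UNIV" and c: "c = scale \<gamma> (b 1)"
    and table: "\<And>i j k. i \<in> {1..n} \<Longrightarrow> j \<in> {1..n} \<Longrightarrow> k \<in> {1..n} \<Longrightarrow>
      T i j k = (if k = j then h (b i) c else 0) + (if k = 1 then \<gamma> * h (b i) (b j) else 0)"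
  shows "iso_to_model scale (form_mult c) n T"
proof (rule iso_to_modelI[OF _ dim span])
  show "finite_dimensional_vector_space scale Basis" ..
  fix i j assume ij: "i \<in> {1..n}" "j \<in> {1..n}"
  have "(\<Sum>k = 1..n. scale (T i j k) (b k)) =
        (\<Sum>k = 1..n. (if k = j then scale (h (b i) c) (b k) else 0) +
                      (if k = 1 then scale (\<gamma> * h (b i) (b j)) (b k) else 0))"
    using table ij by (intro sum.cong) (auto simp: scale_left_distrib)
  also have "\<dots> = form_mult c (b i) (b j)"
    using ij c by (simp add: sum.distrib mult.commute)
  finally show "form_mult c (b i) (b j) = (\<Sum>k = 1..n. scale (T i j k) (b k))"
    by (rule sym)
qed

lemma nonisotropic_splitting:
  assumes dim: "dim UNIV = n" and c: "h c c \<noteq> 0"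
  shows "span (insert c (orthogonal_complement {c})) = UNIV"
    and "n = dim (orthogonal_complement {c}) + 1"
proof -
  show span: "span (insert c (orthogonal_complement {c})) = UNIV"
    using span_insert_orthogonal_complement[of c UNIV] c by simp
  have "c \<notin> orthogonal_complement {c}" using c by (simp add: orthogonal_complement_def)
  then show "n = dim (orthogonal_complement {c}) + 1"
    using dim span dim_span dim_insert by (metis span_orthogonal_complement)
qed

lemma hyperbolic_partner_exists:
  assumes c: "h c c = 0" and d: "h d c \<noteq> 0"
  obtains f where "h f c = 1" "h f f = 0"
proof
  define e where "e = scale (1 / h d c) d"
  have e: "h e c = 1" "h c e = 1" using d form_commute[of c e] by (simp_all add: e_def)
  show "h (e - scale (h e e / 2) c) c = 1" using c e by simp
  show "h (e - scale (h e e / 2) c) (e - scale (h e e / 2) c) = 0" using c e by simp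
qed

lemma hyperbolic_splitting:
  assumes dim: "dim UNIV = n" and c: "h c c = 0" and f: "h f c = 1" "h f f = 0"
  shows "span (insert c (insert f (orthogonal_complement {c, f}))) = UNIV"
    and "n = dim (orthogonal_complement {c, f}) + 2"
proof -
  define T where "T = orthogonal_complement {c, f}"
  have "x - scale (h x f) c - scale (h x c) f \<in> T" for x
    using c f form_commute[of c f] by (simp add: T_def orthogonal_complement_def)
  then show span: "span (insert c (insert f T)) = UNIV"
    unfolding T_def by (metis span_orthogonal_complement span_breakdown_eq UNIV_eq_I
        diff_diff_eq2 diff_add_eq)
  have "f \<notin> T" using f by (simp add: T_def orthogonal_complement_def)
  have "insert f T \<subseteq> orthogonal_complement {f}"
    using f by (auto simp: T_def orthogonal_complement_def)
  then have "span (insert f T) \<subseteq> orthogonal_complement {f}"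
    by (simp add: span_minimal subspace_orthogonal_complement)
  then have "c \<notin> span (insert f T)" using f form_commute[of c f] by (auto simp: orthogonal_complement_def)
  have "n = dim (insert c (insert f T))" using dim span by (metis dim_span)
  also have "\<dots> = dim T + 2"
    using \<open>c \<notin> span (insert f T)\<close> \<open>f \<notin> T\<close> by (simp add: dim_insert T_def)
  finally show "n = dim T + 2" .
qed

lemma nonisotropic_normal_basis:
  assumes dim: "dim UNIV = n" and c: "h c c \<noteq> 0"
  obtains m where "m \<le> n - 1"
    "\<And>I. I \<subseteq> {2..n} \<Longrightarrow> card I = m \<Longrightarrow>
       \<exists>b. span (b ` {1..n}) = UNIV \<and> c = scale (h c c) (b 1) \<and>
           (\<forall>i\<in>{1..n}. h (b i) c = (if i = 1 then 1 else 0)) \<and>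
           (\<forall>i\<in>{1..n}. \<forall>j\<in>{1..n}.
              h c c * h (b i) (b j) = (if i = j \<and> (i = 1 \<or> i \<in> I) then 1 else 0))"
proof -
  define T where "T = orthogonal_complement {c}"
  note splitting = nonisotropic_splitting[OF dim c, folded T_def]
  have "1 / h c c \<noteq> 0" using c by simp
  then show thesis
  proof (cases rule: diagonal_family_exists[where S = T and 'b = nat])
    case (1 m)
    show thesis
    proof (rule that)
      show "m \<le> n - 1" using 1(1) splitting(2) by simp
      fix I assume I: "I \<subseteq> {2..n}" "card I = m"
      obtain w where w: "span (w ` {2..n}) = T"
        "\<And>i j. i \<in> {2..n} \<Longrightarrow> j \<in> {2..n} \<Longrightarrow>
           h (w i) (w j) = (if i = j \<and> i \<in> I then 1 / h c c else 0)"
        using 1(2)[of "{2..n}" I] I splitting(2) by (auto simp: T_def)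
      have "w j \<in> T" if "j \<in> {2..n}" for j using w(1) span_superset that by blast
      then have w_perp: "h (w j) c = 0" "h c (w j) = 0" if "j \<in> {2..n}" for j
        using that form_commute[of c] by (auto simp: T_def orthogonal_complement_def)
      define b where "b j = (if j = 1 then scale (1 / h c c) c else w j)" for j
      have c_b: "c = scale (h c c) (b 1)" using c by (simp add: b_def)
      moreover have "b 1 \<in> b ` {1..n}" using splitting(2) by simp
      ultimately have "c \<in> span (b ` {1..n})" by (metis span_base span_scale)
      moreover have "T \<subseteq> span (b ` {1..n})"
        using w(1) span_mono[of "w ` {2..n}" "b ` {1..n}"] by (force simp: b_def)
      ultimately have "span (b ` {1..n}) = UNIV"
        using splitting(1) span_minimal[OF _ subspace_span] by (metis insert_subset top.extremum_uniqueI)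
      moreover have "\<forall>i\<in>{1..n}. h (b i) c = (if i = 1 then 1 else 0)"
        using c w_perp by (simp add: b_def)
      moreover have "\<forall>i\<in>{1..n}. \<forall>j\<in>{1..n}.
          h c c * h (b i) (b j) = (if i = j \<and> (i = 1 \<or> i \<in> I) then 1 else 0)"
        using c I(1) by (auto simp: b_def w(2) w_perp)
      ultimately show "\<exists>b. span (b ` {1..n}) = UNIV \<and> c = scale (h c c) (b 1) \<and>
          (\<forall>i\<in>{1..n}. h (b i) c = (if i = 1 then 1 else 0)) \<and>
          (\<forall>i\<in>{1..n}. \<forall>j\<in>{1..n}.
             h c c * h (b i) (b j) = (if i = j \<and> (i = 1 \<or> i \<in> I) then 1 else 0))"
        using c_b by blast
    qed
  qed
qed

lemma isotropic_normal_basis: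
  assumes dim: "dim UNIV = n" and c: "h c c = 0" and d: "h d c \<noteq> 0"
  obtains m where "m \<le> n - 2"
    "\<And>I. I \<subseteq> {3..n} \<Longrightarrow> card I = m \<Longrightarrow>
       \<exists>b. span (b ` {1..n}) = UNIV \<and> c = b 1 \<and>
           (\<forall>i\<in>{1..n}. h (b i) c = (if i = 2 then 1 else 0)) \<and>
           (\<forall>i\<in>{1..n}. \<forall>j\<in>{1..n}. h (b i) (b j) =
              (if i = 1 \<and> j = 2 \<or> i = 2 \<and> j = 1 \<or> i = j \<and> i \<in> I then 1 else 0))"
proof -
  obtain f where f: "h f c = 1" "h f f = 0" using hyperbolic_partner_exists[OF c d] .
  define T where "T = orthogonal_complement {c, f}"
  note splitting = hyperbolic_splitting[OF dim c f, folded T_def]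
  show thesis
  proof (cases rule: diagonal_family_exists[where S = T and 'b = nat, OF one_neq_zero])
    case (1 m)
    show thesis
    proof (rule that)
      show "m \<le> n - 2" using 1(1) splitting(2) by simp
      fix I assume I: "I \<subseteq> {3..n}" "card I = m"
      obtain w where w: "span (w ` {3..n}) = T"
        "\<And>i j. i \<in> {3..n} \<Longrightarrow> j \<in> {3..n} \<Longrightarrow>
           h (w i) (w j) = (if i = j \<and> i \<in> I then 1 else 0)"
        using 1(2)[of "{3..n}" I] I splitting(2) by (auto simp: T_def)
      have "w j \<in> T" if "j \<in> {3..n}" for j using w(1) span_superset that by blast
      then have w_perp: "h (w j) c = 0" "h c (w j) = 0" "h (w j) f = 0" "h f (w j) = 0"
        if "j \<in> {3..n}" for j
        using that form_commute[of c] form_commute[of f]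
        by (auto simp: T_def orthogonal_complement_def)
      define b where "b j = (if j = 1 then c else if j = 2 then f else w j)" for j
      have "c \<in> span (b ` {1..n})" "f \<in> span (b ` {1..n})"
        using splitting(2) by (force simp: b_def intro: span_base)+
      moreover have "T \<subseteq> span (b ` {1..n})"
        using w(1) span_mono[of "w ` {3..n}" "b ` {1..n}"] by (force simp: b_def)
      ultimately have "span (b ` {1..n}) = UNIV"
        using splitting(1) span_minimal[OF _ subspace_span] by (metis insert_subset top.extremum_uniqueI)
      moreover have "c = b 1" by (simp add: b_def)
      moreover have "\<forall>i\<in>{1..n}. h (b i) c = (if i = 2 then 1 else 0)"
        using c f w_perp by (simp add: b_def)
      moreover have "\<forall>i\<in>{1..n}. \<forall>j\<in>{1..n}. h (b i) (b j) =
          (if i = 1 \<and> j = 2 \<or> i = 2 \<and> j = 1 \<or> i = j \<and> i \<in> I then 1 else 0)"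
        using c f I(1) form_commute[of c f] by (auto simp: b_def w(2) w_perp)
      ultimately show "\<exists>b. span (b ` {1..n}) = UNIV \<and> c = b 1 \<and>
          (\<forall>i\<in>{1..n}. h (b i) c = (if i = 2 then 1 else 0)) \<and>
          (\<forall>i\<in>{1..n}. \<forall>j\<in>{1..n}. h (b i) (b j) =
             (if i = 1 \<and> j = 2 \<or> i = 2 \<and> j = 1 \<or> i = j \<and> i \<in> I then 1 else 0))"
        by blast
    qed
  qed
qed

lemma iso_to_model_A1_or_A2:
  assumes dim: "dim UNIV = n" and c: "h c c \<noteq> 0"
  shows "iso_to_model scale (form_mult c) n (A1_const n) \<or>
    (\<exists>k\<in>{0..n-2}. iso_to_model scale (form_mult c) n (A2_const n k))"
proof (cases rule: nonisotropic_normal_basis[OF dim c])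
  case (1 m)
  have iso: "iso_to_model scale (form_mult c) n T"
    if I: "I \<subseteq> {2..n}" "card I = m"
      and T: "\<And>i j k. i \<in> {1..n} \<Longrightarrow> j \<in> {1..n} \<Longrightarrow>
        T i j k = (if k = j \<and> i = 1 then 1 else 0) +
                  (if k = 1 \<and> i = j \<and> (i = 1 \<or> i \<in> I) then 1 else 0)"
    for I T
  proof -
    obtain b where b: "span (b ` {1..n}) = UNIV" "c = scale (h c c) (b 1)"
      "\<forall>i\<in>{1..n}. h (b i) c = (if i = 1 then 1 else 0)"
      "\<forall>i\<in>{1..n}. \<forall>j\<in>{1..n}.
         h c c * h (b i) (b j) = (if i = j \<and> (i = 1 \<or> i \<in> I) then 1 else 0)"
      using 1(2)[OF I] by blast
    show ?thesis by (rule iso_to_model_form_mult[OF dim b(1,2)]) (simp add: T b(3,4))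
  qed
  show ?thesis
  proof (cases "m = n - 1")
    case True
    then have "iso_to_model scale (form_mult c) n (A1_const n)"
      by (intro iso[of "{2..n}"]) (auto simp: A1_const_def)
    then show ?thesis ..
  next
    case False
    then have "iso_to_model scale (form_mult c) n (A2_const n m)"
      using 1(1) by (intro iso[of "{3..m+2}"]) (auto simp: A2_const_def)
    then show ?thesis using False 1(1) by auto
  qed
qed

lemma iso_to_model_A3:
  assumes dim: "dim UNIV = n" and c: "h c c = 0" and d: "h d c \<noteq> 0"
  shows "\<exists>k\<in>{0..n-2}. iso_to_model scale (form_mult c) n (A3_const n k)"
proof (cases rule: isotropic_normal_basis[OF dim c d])
  case (1 m)
  have I: "{3..m+2} \<subseteq> {3..n}" "card {3..m+2} = m" using 1(1) by auto
  obtain b where b: "span (b ` {1..n}) = UNIV" "c = b 1"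
    "\<forall>i\<in>{1..n}. h (b i) c = (if i = 2 then 1 else 0)"
    "\<forall>i\<in>{1..n}. \<forall>j\<in>{1..n}. h (b i) (b j) =
       (if i = 1 \<and> j = 2 \<or> i = 2 \<and> j = 1 \<or> i = j \<and> i \<in> {3..m+2} then 1 else 0)"
    using 1(2)[OF I] by blast
  have "c = scale 1 (b 1)" using b(2) by simp
  then have "iso_to_model scale (form_mult c) n (A3_const n m)"
    by (rule iso_to_model_form_mult[OF dim b(1)]) (auto simp: b(2-4) A3_const_def)
  then show ?thesis using 1(1) by auto
qed

end

theorem proposition3p7:
  fixes scale :: "complex \<Rightarrow> 'a::ab_group_add \<Rightarrow> 'a"
    and h :: "'a \<Rightarrow> 'a \<Rightarrow> complex"
    and c :: 'a
    and n :: nat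
  assumes vs: "vector_space scale"
    and dim: "vector_space.dim scale (UNIV :: 'a set) = n"
    and n2: "2 \<le> n"
    and h: "sym_bilinear_form scale h"
    and hc: "\<exists>x. h x c \<noteq> 0"
  defines "mult \<equiv> (\<lambda>x y. scale (h x c) y + scale (h x y) c)"
  shows "(h c c \<noteq> 0 \<longrightarrow>
            iso_to_model scale mult n (A1_const n) \<or>
            (\<exists>k\<in>{0..n-2}. iso_to_model scale mult n (A2_const n k)))
       \<and> (h c c = 0 \<longrightarrow>
            (\<exists>k\<in>{0..n-2}. iso_to_model scale mult n (A3_const n k)))"
proof -
  obtain B where "finite_dimensional_vector_space scale B"
    using finite_dimensional_vector_space_of_dim[OF vs dim] n2 by auto
  then interpret symmetric_form_space scale B h
    using h by (simp add: symmetric_form_space_def symmetric_form_space_axioms_def)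
  show ?thesis
    unfolding mult_def using iso_to_model_A1_or_A2 iso_to_model_A3 dim hc by blast
qed

end
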